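(* Let $0<p,r,p_1,r_1,q\leqslant\infty$ and $0<\alpha<\infty$. Suppose that for all $k\in\mathbb Z$ and all $u$, $f$, $$\|D^\alpha\Box_kW(t)u\|_{L_x^pL_t^r}\lesssim\|\Box_ku\|_{L^q},\qquad \|D^\alpha\Box_k\mathscr Af\|_{L_x^pL_t^r}\lesssim\|\Box_kf\|_{L_x^{p_1}L_t^{r_1}}.$$ Then for all $j,k\in\mathbb Z$, $$\|D^\alpha\Box_{j,k}W(t)u\|_{L_x^pL_t^r}\lesssim 2^{j\delta}\|\Box_{j,k}u\|_{L^q},\qquad \|D^\alpha\Box_{j,k}\mathscr Af\|_{L_x^pL_t^r}\lesssim 2^{j\tau}\|\Box_{j,k}f\|_{L_x^{p_1}L_t^{r_1}},$$ where $\delta=\alpha-4/r-1/p+1/q$ and $\tau=\alpha-4-4/r-1/p+4/r_1+1/p_1$.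
   Context: Functions are on $\mathbb R$ in $x$; $t\in\mathbb R$. $D^\alpha f=\mathcal F^{-1}|\xi|^\alpha\hat f$, $W(t)=\mathcal F^{-1}e^{it\xi^4}\mathcal F$, $\mathscr Af(t)=\int_0^tW(t-s)f(s)\,ds$. Let $\sigma$ be a smooth cut-off function adapted to $[-1/2,1/2]$, vanishing outside $[-3/4,3/4]$, with $\sum_{k\in\mathbb Z}\sigma(\xi-k)\equiv1$; $\Box_{j,k}=\mathcal F^{-1}\sigma(2^{-j}\cdot-k)\mathcal F$ (in $x$) and $\Box_k=\Box_{0,k}$. Mixed norm: $\|u\|_{L^a_xL^b_t}=\big\|\,\|u(t,x)\|_{L^b_t}\big\|_{L^a_x}$. Implicit constants are independent of $j,k,u,f$. *)

theory Defs
  imports "HOL-Analysis.Analysis"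
begin

definition schwartz1 :: "(real \<Rightarrow> complex) \<Rightarrow> bool" where
  "schwartz1 u \<longleftrightarrow> (\<exists>D::nat \<Rightarrow> real \<Rightarrow> complex. D 0 = u \<and>
     (\<forall>n x. (D n has_vector_derivative D (Suc n) x) (at x)) \<and>
     (\<forall>m n. bounded (range (\<lambda>x. ((1 + \<bar>x\<bar>) ^ m) *\<^sub>R D n x))))"

text \<open>Schwartz functions of (t,x) in the plane, written as curried functions f t x;
  D a b is the partial derivative of order a in t and b in x.\<close>
definition schwartz2 :: "(real \<Rightarrow> real \<Rightarrow> complex) \<Rightarrow> bool" where
  "schwartz2 f \<longleftrightarrow> (\<exists>D::nat \<Rightarrow> nat \<Rightarrow> real \<Rightarrow> real \<Rightarrow> complex. D 0 0 = f \<and>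
     (\<forall>a b t x. ((\<lambda>s. D a b s x) has_vector_derivative D (Suc a) b t x) (at t)) \<and>
     (\<forall>a b t x. ((\<lambda>y. D a b t y) has_vector_derivative D a (Suc b) t x) (at x)) \<and>
     (\<forall>m a b. bounded (range (\<lambda>(t, x). ((1 + \<bar>t\<bar> + \<bar>x\<bar>) ^ m) *\<^sub>R D a b t x))))"

definition fourier :: "(real \<Rightarrow> complex) \<Rightarrow> real \<Rightarrow> complex" where
  "fourier u \<xi> = (LINT x|lborel. cis (- (x * \<xi>)) * u x)"

definition inv_fourier :: "(real \<Rightarrow> complex) \<Rightarrow> real \<Rightarrow> complex" where
  "inv_fourier g x = complex_of_real (1 / (2 * pi)) * (LINT \<xi>|lborel. cis (x * \<xi>) * g \<xi>)"

text \<open>Fourier multiplier of \<open>\<box>\<^sub>j\<^sub>,\<^sub>k\<close>: \<open>\<sigma>(2^{-j}\<xi> - k)\<close>.\<close>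
definition boxsym :: "(real \<Rightarrow> real) \<Rightarrow> int \<Rightarrow> int \<Rightarrow> real \<Rightarrow> real" where
  "boxsym \<sigma> j k \<xi> = \<sigma> (2 powr (- real_of_int j) * \<xi> - real_of_int k)"

definition box :: "(real \<Rightarrow> real) \<Rightarrow> int \<Rightarrow> int \<Rightarrow> (real \<Rightarrow> complex) \<Rightarrow> real \<Rightarrow> complex" where
  "box \<sigma> j k u = inv_fourier (\<lambda>\<xi>. complex_of_real (boxsym \<sigma> j k \<xi>) * fourier u \<xi>)"

text \<open>\<open>(D^\<alpha> \<box>\<^sub>j\<^sub>,\<^sub>k W(t) u)(x)\<close>, as a function of t and x.\<close>
definition DboxW :: "real \<Rightarrow> (real \<Rightarrow> real) \<Rightarrow> int \<Rightarrow> int \<Rightarrow> (real \<Rightarrow> complex)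
    \<Rightarrow> real \<Rightarrow> real \<Rightarrow> complex" where
  "DboxW \<alpha> \<sigma> j k u t = inv_fourier (\<lambda>\<xi>. complex_of_real (\<bar>\<xi>\<bar> powr \<alpha> * boxsym \<sigma> j k \<xi>)
       * cis (t * \<xi> ^ 4) * fourier u \<xi>)"

text \<open>\<open>(D^\<alpha> \<box>\<^sub>j\<^sub>,\<^sub>k \<A>f)(t,x)\<close> with \<open>\<A>f(t) = \<integral>\<^sub>0\<^sup>t W(t-s) f(s) ds\<close>
  (oriented integral), f given as f s x.\<close>
definition DboxA :: "real \<Rightarrow> (real \<Rightarrow> real) \<Rightarrow> int \<Rightarrow> int \<Rightarrow> (real \<Rightarrow> real \<Rightarrow> complex)
    \<Rightarrow> real \<Rightarrow> real \<Rightarrow> complex" where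
  "DboxA \<alpha> \<sigma> j k f t = inv_fourier (\<lambda>\<xi>. complex_of_real (\<bar>\<xi>\<bar> powr \<alpha> * boxsym \<sigma> j k \<xi>)
       * (LBINT s=0..t. cis ((t - s) * \<xi> ^ 4) * fourier (f s) \<xi>))"

definition epow :: "ennreal \<Rightarrow> real \<Rightarrow> ennreal" where
  "epow x a = (if x = top then top else ennreal (enn2real x powr a))"

definition Lnorm :: "ennreal \<Rightarrow> (real \<Rightarrow> ennreal) \<Rightarrow> ennreal" where
  "Lnorm p g = (if p = top then Inf {c. AE x in lborel. g x \<le> c}
     else epow (\<integral>\<^sup>+ x. epow (g x) (enn2real p) \<partial>lborel) (1 / enn2real p))"

definition Lq :: "ennreal \<Rightarrow> (real \<Rightarrow> complex) \<Rightarrow> ennreal" where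
  "Lq q u = Lnorm q (\<lambda>x. ennreal (norm (u x)))"

text \<open>Mixed norm \<open>\<parallel>F\<parallel>_{L^p_x L^r_t}\<close> of F given as F t x.\<close>
definition mixnorm :: "ennreal \<Rightarrow> ennreal \<Rightarrow> (real \<Rightarrow> real \<Rightarrow> complex) \<Rightarrow> ennreal" where
  "mixnorm p r F = Lnorm p (\<lambda>x. Lnorm r (\<lambda>t. ennreal (norm (F t x))))"

text \<open>Reciprocal of an exponent, with \<open>1/\<infinity> = 0\<close>.\<close>
definition rcp :: "ennreal \<Rightarrow> real" where
  "rcp p = enn2real (inverse p)"

end

theory Submission
  imports Defs
begin

text \<open>The parabolic dilation \<open>x \<mapsto> 2^j x\<close>, \<open>t \<mapsto> 2^{4j} t\<close> conjugates the dyadic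
  operators to the case \<open>j = 0\<close>: with \<open>u\<^sub>j(y) = u(2^{-j} y)\<close> one has
  \<open>\<box>\<^sub>j\<^sub>,\<^sub>k u(x) = \<box>\<^sub>0\<^sub>,\<^sub>k u\<^sub>j(2^j x)\<close> and
  \<open>D^\<alpha> \<box>\<^sub>j\<^sub>,\<^sub>k W(t) u(x) = 2^{j\<alpha>} (D^\<alpha> \<box>\<^sub>0\<^sub>,\<^sub>k W(2^{4j} t) u\<^sub>j)(2^j x)\<close>, while the
  Duhamel term picks up an extra \<open>2^{-4j}\<close> from \<open>ds\<close>. Dilating the variables costs
  \<open>2^{-j/p}\<close> in \<open>L^p_x\<close> and \<open>2^{-4j/r}\<close> in \<open>L^r_t\<close>, and the Schwartz classes are invariant
  under dilations, so the \<open>j = 0\<close> estimates applied to \<open>u\<^sub>j\<close> yield the stated powers of 2.\<close>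

section \<open>Dilations of Lebesgue measure\<close>

text \<open>\<open>Lnorm\<close> is applied to arbitrary, possibly non-measurable functions, so the scaling laws
  of Lebesgue measure are needed without the measurability hypotheses of the library versions.\<close>

lemma AE_lborel_real_affine:
  fixes c t :: real
  assumes "c \<noteq> 0" and "AE x in lborel. P x"
  shows "AE x in lborel. P (t + c * x)"
proof -
  obtain N where N: "{x \<in> space lborel. \<not> P x} \<subseteq> N" "N \<in> sets borel" "emeasure lborel N = 0"
    using assms(2) by (auto elim!: AE_E)
  have "AE x in lborel. x \<notin> N"
    using N by (intro AE_I'[of N]) auto
  then have "AE x in lborel. t + c * x \<notin> N"
    using assms(1) N(2) by (intro AE_borel_affine) auto
  then show ?thesis
    by (rule eventually_mono) (use N(1) in auto)
qed

lemma nn_integral_le_by_measurable: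
  assumes "\<And>g. g \<in> borel_measurable M \<Longrightarrow> g \<le> f \<Longrightarrow> integral\<^sup>N M g \<le> B"
  shows "integral\<^sup>N M f \<le> B"
  unfolding nn_integral_def[of M f]
proof (rule SUP_least, clarify)
  fix g assume g: "simple_function M g" "g \<le> f"
  then have "integral\<^sup>N M g \<le> B"
    by (intro assms borel_measurable_simple_function)
  then show "integral\<^sup>S M g \<le> B"
    using nn_integral_eq_simple_integral[OF g(1)] by simp
qed

lemma ennreal_inverse_cancel:
  fixes b :: real assumes "b > 0"
  shows "ennreal (1 / b) * (ennreal b * x) = x" "ennreal b * (ennreal (1 / b) * x) = x"
  using assms by (simp_all add: mult.assoc[symmetric] ennreal_mult[symmetric])

lemma ennreal_cmult_le_iff:
  fixes b :: real assumes "b > 0"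
  shows "ennreal b * x \<le> y \<longleftrightarrow> x \<le> ennreal (1 / b) * y"
  using ennreal_mult_le_mult_iff[of "ennreal b" x "ennreal (1 / b) * y"] assms
  by (simp add: ennreal_inverse_cancel)

lemma nn_integral_ennreal_cmult:
  fixes b :: real
  assumes b: "b > 0"
  shows "(\<integral>\<^sup>+x. ennreal b * f x \<partial>M) = ennreal b * integral\<^sup>N M f"
proof (rule antisym)
  show "(\<integral>\<^sup>+x. ennreal b * f x \<partial>M) \<le> ennreal b * integral\<^sup>N M f"
  proof (rule nn_integral_le_by_measurable)
    fix g assume g: "g \<in> borel_measurable M" "g \<le> (\<lambda>x. ennreal b * f x)"
    have "integral\<^sup>N M g = ennreal b * (\<integral>\<^sup>+x. ennreal (1 / b) * g x \<partial>M)"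
      using g(1) b by (simp add: nn_integral_cmult ennreal_inverse_cancel)
    also have "\<dots> \<le> ennreal b * integral\<^sup>N M f"
      using g(2) b by (intro mult_left_mono nn_integral_mono) (auto simp: le_fun_def ennreal_cmult_le_iff)
    finally show "integral\<^sup>N M g \<le> ennreal b * integral\<^sup>N M f" .
  qed
  have "integral\<^sup>N M f \<le> ennreal (1 / b) * (\<integral>\<^sup>+x. ennreal b * f x \<partial>M)"
  proof (rule nn_integral_le_by_measurable)
    fix g assume g: "g \<in> borel_measurable M" "g \<le> f"
    have "integral\<^sup>N M g = ennreal (1 / b) * (\<integral>\<^sup>+x. ennreal b * g x \<partial>M)"
      using g(1) b by (simp add: nn_integral_cmult ennreal_inverse_cancel)
    also have "\<dots> \<le> ennreal (1 / b) * (\<integral>\<^sup>+x. ennreal b * f x \<partial>M)"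
      using g(2) by (intro mult_left_mono nn_integral_mono) (auto simp: le_fun_def)
    finally show "integral\<^sup>N M g \<le> ennreal (1 / b) * (\<integral>\<^sup>+x. ennreal b * f x \<partial>M)" .
  qed
  then show "ennreal b * integral\<^sup>N M f \<le> (\<integral>\<^sup>+x. ennreal b * f x \<partial>M)"
    using b by (simp add: ennreal_cmult_le_iff)
qed

lemma nn_integral_lborel_real_affine:
  fixes c t :: real and f :: "real \<Rightarrow> ennreal"
  assumes c: "c \<noteq> 0"
  shows "(\<integral>\<^sup>+x. f x \<partial>lborel) = ennreal \<bar>c\<bar> * (\<integral>\<^sup>+x. f (t + c * x) \<partial>lborel)"
proof (rule antisym)
  show "(\<integral>\<^sup>+x. f x \<partial>lborel) \<le> ennreal \<bar>c\<bar> * (\<integral>\<^sup>+x. f (t + c * x) \<partial>lborel)"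
  proof (rule nn_integral_le_by_measurable)
    fix g :: "real \<Rightarrow> ennreal"
    assume g: "g \<in> borel_measurable lborel" "g \<le> f"
    then have "integral\<^sup>N lborel g = ennreal \<bar>c\<bar> * (\<integral>\<^sup>+x. g (t + c * x) \<partial>lborel)"
      using c by (intro nn_integral_real_affine) auto
    also have "\<dots> \<le> ennreal \<bar>c\<bar> * (\<integral>\<^sup>+x. f (t + c * x) \<partial>lborel)"
      using g(2) by (intro mult_left_mono nn_integral_mono) (auto simp: le_fun_def)
    finally show "integral\<^sup>N lborel g \<le> ennreal \<bar>c\<bar> * (\<integral>\<^sup>+x. f (t + c * x) \<partial>lborel)" .
  qed
  have "(\<integral>\<^sup>+x. f (t + c * x) \<partial>lborel) \<le> ennreal (1 / \<bar>c\<bar>) * (\<integral>\<^sup>+x. f x \<partial>lborel)"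
  proof (rule nn_integral_le_by_measurable)
    fix g :: "real \<Rightarrow> ennreal"
    assume g: "g \<in> borel_measurable lborel" "g \<le> (\<lambda>x. f (t + c * x))"
    have "integral\<^sup>N lborel g = ennreal \<bar>1 / c\<bar> * (\<integral>\<^sup>+x. g (- t / c + (1 / c) * x) \<partial>lborel)"
      using g(1) c by (intro nn_integral_real_affine) auto
    then have "integral\<^sup>N lborel g = ennreal (1 / \<bar>c\<bar>) * (\<integral>\<^sup>+x. g (- t / c + (1 / c) * x) \<partial>lborel)"
      by simp
    also have "\<dots> \<le> ennreal (1 / \<bar>c\<bar>) * (\<integral>\<^sup>+x. f x \<partial>lborel)"
    proof (intro mult_left_mono nn_integral_mono)
      fix x
      have "t + c * (- t / c + 1 / c * x) = x"
        using c by (simp add: field_simps)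
      then show "g (- t / c + 1 / c * x) \<le> f x"
        using le_funD[OF g(2), of "- t / c + 1 / c * x"] by simp
    qed simp
    finally show "integral\<^sup>N lborel g \<le> ennreal (1 / \<bar>c\<bar>) * (\<integral>\<^sup>+x. f x \<partial>lborel)" .
  qed
  then show "ennreal \<bar>c\<bar> * (\<integral>\<^sup>+x. f (t + c * x) \<partial>lborel) \<le> (\<integral>\<^sup>+x. f x \<partial>lborel)"
    using c by (simp add: ennreal_cmult_le_iff)
qed

lemma INF_ennreal_cmult:
  fixes b :: real assumes b: "b > 0"
  shows "(INF c\<in>S. ennreal b * c) = ennreal b * Inf S"
proof (rule antisym)
  have "ennreal (1 / b) * (INF c\<in>S. ennreal b * c) \<le> Inf S"
  proof (rule Inf_greatest)
    fix s assume "s \<in> S"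
    then have "ennreal (1 / b) * (INF c\<in>S. ennreal b * c) \<le> ennreal (1 / b) * (ennreal b * s)"
      by (intro mult_left_mono INF_lower) auto
    then show "ennreal (1 / b) * (INF c\<in>S. ennreal b * c) \<le> s"
      using b by (simp add: ennreal_inverse_cancel)
  qed
  then show "(INF c\<in>S. ennreal b * c) \<le> ennreal b * Inf S"
    using ennreal_cmult_le_iff[of "1 / b"] b by simp
  show "ennreal b * Inf S \<le> (INF c\<in>S. ennreal b * c)"
    by (intro INF_greatest mult_left_mono Inf_lower) auto
qed

lemma epow_cmult:
  fixes b :: real assumes b: "b > 0"
  shows "epow (ennreal b * y) e = ennreal (b powr e) * epow y e"
proof (cases "y = top")
  case False
  then have "ennreal b * y \<noteq> top" "enn2real (ennreal b * y) = b * enn2real y"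
    using b by (simp_all add: ennreal_mult_eq_top_iff enn2real_mult)
  then show ?thesis
    using False b by (simp add: epow_def powr_mult ennreal_mult[symmetric])
qed (use b in \<open>simp add: epow_def ennreal_mult_top\<close>)

lemma rcp_finite:
  assumes "0 < p" "p \<noteq> top"
  shows "enn2real p > 0" "rcp p = 1 / enn2real p"
proof -
  obtain P where "p = ennreal P" "P > 0"
    using assms by (cases p) auto
  then show "enn2real p > 0" "rcp p = 1 / enn2real p"
    by (auto simp: rcp_def inverse_ennreal divide_inverse)
qed

lemma Lnorm_cmult:
  fixes b :: real and g :: "real \<Rightarrow> ennreal"
  assumes p: "0 < p" and b: "b > 0"
  shows "Lnorm p (\<lambda>x. ennreal b * g x) = ennreal b * Lnorm p g"
proof (cases "p = top")
  case True
  have "{c. AE x in lborel. ennreal b * g x \<le> c} = (\<lambda>c. ennreal b * c) ` {c. AE x in lborel. g x \<le> c}"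
  proof (intro equalityI subsetI)
    fix c assume "c \<in> {c. AE x in lborel. ennreal b * g x \<le> c}"
    then have "AE x in lborel. g x \<le> ennreal (1 / b) * c"
      using b by (simp add: ennreal_cmult_le_iff)
    moreover have "c = ennreal b * (ennreal (1 / b) * c)"
      using b by (simp add: ennreal_inverse_cancel)
    ultimately show "c \<in> (\<lambda>c. ennreal b * c) ` {c. AE x in lborel. g x \<le> c}"
      by blast
  qed (auto elim!: eventually_mono intro: mult_left_mono)
  then show ?thesis
    using True b by (simp add: Lnorm_def INF_ennreal_cmult)
next
  case False
  let ?P = "enn2real p"
  have "Lnorm p (\<lambda>x. ennreal b * g x)
      = epow (ennreal (b powr ?P) * (\<integral>\<^sup>+x. epow (g x) ?P \<partial>lborel)) (1 / ?P)"
    using False b by (simp add: Lnorm_def epow_cmult nn_integral_ennreal_cmult)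
  also have "\<dots> = ennreal ((b powr ?P) powr (1 / ?P)) * Lnorm p g"
    using False b by (simp add: Lnorm_def epow_cmult)
  also have "(b powr ?P) powr (1 / ?P) = b"
    using rcp_finite[OF p False] b by (simp add: powr_powr)
  finally show ?thesis .
qed

lemma Lnorm_dilate:
  fixes c :: real and g :: "real \<Rightarrow> ennreal"
  assumes p: "0 < p" and c: "c \<noteq> 0"
  shows "Lnorm p (\<lambda>x. g (c * x)) = ennreal (\<bar>c\<bar> powr (- rcp p)) * Lnorm p g"
proof (cases "p = top")
  case True
  have "(AE x in lborel. g (c * x) \<le> d) \<longleftrightarrow> (AE x in lborel. g x \<le> d)" for d
  proof
    assume "AE x in lborel. g (c * x) \<le> d"
    then have "AE x in lborel. g (c * (0 + 1 / c * x)) \<le> d"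
      using AE_lborel_real_affine[of "1 / c" "\<lambda>x. g (c * x) \<le> d" 0] c by simp
    then show "AE x in lborel. g x \<le> d"
      using c by simp
  next
    assume "AE x in lborel. g x \<le> d"
    then show "AE x in lborel. g (c * x) \<le> d"
      using AE_lborel_real_affine[OF c, of "\<lambda>x. g x \<le> d" 0] by simp
  qed
  then show ?thesis
    using True c by (simp add: Lnorm_def rcp_def)
next
  case False
  let ?P = "enn2real p"
  have "(\<integral>\<^sup>+x. epow (g x) ?P \<partial>lborel) = ennreal \<bar>c\<bar> * (\<integral>\<^sup>+x. epow (g (c * x)) ?P \<partial>lborel)"
    using nn_integral_lborel_real_affine[OF c, of "\<lambda>x. epow (g x) ?P" 0] by simp
  then have "(\<integral>\<^sup>+x. epow (g (c * x)) ?P \<partial>lborel) = ennreal (1 / \<bar>c\<bar>) * (\<integral>\<^sup>+x. epow (g x) ?P \<partial>lborel)"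
    using c by (simp add: ennreal_inverse_cancel)
  then have "Lnorm p (\<lambda>x. g (c * x)) = ennreal ((1 / \<bar>c\<bar>) powr (1 / ?P)) * Lnorm p g"
    using False c by (simp add: Lnorm_def epow_cmult)
  also have "(1 / \<bar>c\<bar>) powr (1 / ?P) = \<bar>c\<bar> powr (- rcp p)"
    using rcp_finite[OF p False] c by (simp add: powr_minus_divide powr_divide)
  finally show ?thesis .
qed

lemma Lq_dilate:
  assumes "0 < q" "c \<noteq> 0"
  shows "Lq q (\<lambda>x. u (c * x)) = ennreal (\<bar>c\<bar> powr (- rcp q)) * Lq q u"
  using Lnorm_dilate[OF assms] by (simp add: Lq_def)

lemma mixnorm_cmult:
  assumes "0 < p" "0 < r" "b \<noteq> 0"
  shows "mixnorm p r (\<lambda>t x. b * F t x) = ennreal (cmod b) * mixnorm p r F"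
  using assms by (simp add: mixnorm_def norm_mult ennreal_mult Lnorm_cmult)

lemma mixnorm_dilate:
  assumes p: "0 < p" and r: "0 < r" and m: "m \<noteq> 0" and c: "c \<noteq> 0"
  shows "mixnorm p r (\<lambda>t x. F (m * t) (c * x))
    = ennreal (\<bar>m\<bar> powr (- rcp r) * \<bar>c\<bar> powr (- rcp p)) * mixnorm p r F"
proof -
  have "mixnorm p r (\<lambda>t x. F (m * t) (c * x))
      = Lnorm p (\<lambda>x. ennreal (\<bar>m\<bar> powr (- rcp r)) * Lnorm r (\<lambda>t. ennreal (norm (F t (c * x)))))"
  proof -
    have "Lnorm r (\<lambda>t. ennreal (norm (F (m * t) (c * x))))
        = ennreal (\<bar>m\<bar> powr (- rcp r)) * Lnorm r (\<lambda>t. ennreal (norm (F t (c * x))))" for x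
      using Lnorm_dilate[OF r m, of "\<lambda>t. ennreal (norm (F t (c * x)))"] by simp
    then show ?thesis
      by (simp add: mixnorm_def)
  qed
  also have "\<dots> = ennreal (\<bar>m\<bar> powr (- rcp r)) * (ennreal (\<bar>c\<bar> powr (- rcp p)) * mixnorm p r F)"
    using Lnorm_cmult[OF p] Lnorm_dilate[OF p c, of "\<lambda>x. Lnorm r (\<lambda>t. ennreal (norm (F t x)))"] m
    by (simp add: mixnorm_def)
  finally show ?thesis
    by (simp add: ennreal_mult mult.assoc)
qed

section \<open>Dyadic rescaling of the operators\<close>

lemma fourier_dilate:
  assumes c: "c \<noteq> 0"
  shows "fourier (\<lambda>y. u (y / c)) \<xi> = complex_of_real \<bar>c\<bar> * fourier u (c * \<xi>)"
proof -
  have "fourier (\<lambda>y. u (y / c)) \<xi> = \<bar>c\<bar> *\<^sub>R (LINT x|lborel. cis (- ((0 + c * x) * \<xi>)) * u ((0 + c * x) / c))"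
    unfolding fourier_def using c by (rule lborel_integral_real_affine)
  also have "(LINT x|lborel. cis (- ((0 + c * x) * \<xi>)) * u ((0 + c * x) / c)) = fourier u (c * \<xi>)"
    unfolding fourier_def using c by (intro Bochner_Integration.integral_cong) (auto simp: ac_simps)
  finally show ?thesis
    by (simp add: scaleR_conv_of_real)
qed

lemma inv_fourier_dilate:
  assumes c: "c \<noteq> 0"
  shows "inv_fourier (\<lambda>\<xi>. G (c * \<xi>)) (c * x) = complex_of_real (1 / \<bar>c\<bar>) * inv_fourier G x"
proof -
  have "(LINT \<xi>|lborel. cis (x * \<xi>) * G \<xi>) = \<bar>c\<bar> *\<^sub>R (LINT \<eta>|lborel. cis (x * (0 + c * \<eta>)) * G (0 + c * \<eta>))"
    using c by (rule lborel_integral_real_affine)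
  then have "inv_fourier G x = complex_of_real \<bar>c\<bar> * inv_fourier (\<lambda>\<xi>. G (c * \<xi>)) (c * x)"
    by (simp add: inv_fourier_def scaleR_conv_of_real ac_simps)
  then show ?thesis
    using c by simp
qed

lemma inv_fourier_cmult:
  "inv_fourier (\<lambda>\<xi>. a * G \<xi>) x = a * inv_fourier G x"
  by (simp add: inv_fourier_def mult.left_commute)

lemma set_integral_lborel_dilate:
  fixes F :: "real \<Rightarrow> 'a::{banach, second_countable_topology}"
  assumes m: "m > 0"
  shows "(LINT s:{m * a<..<m * b}|lborel. F s) = m *\<^sub>R (LINT s:{a<..<b}|lborel. F (m * s))"
proof -
  have "(LINT s:{m * a<..<m * b}|lborel. F s)
      = \<bar>m\<bar> *\<^sub>R (LINT s|lborel. indicator {m * a<..<m * b} (0 + m * s) *\<^sub>R F (0 + m * s))"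
    unfolding set_lebesgue_integral_def using m by (intro lborel_integral_real_affine) simp
  also have "(LINT s|lborel. indicator {m * a<..<m * b} (0 + m * s) *\<^sub>R F (0 + m * s))
      = (LINT s:{a<..<b}|lborel. F (m * s))"
    unfolding set_lebesgue_integral_def using m
    by (intro Bochner_Integration.integral_cong) (auto simp: indicator_def)
  finally show ?thesis
    using m by simp
qed

lemma interval_integral_lborel_dilate:
  fixes F :: "real \<Rightarrow> 'a::{banach, second_countable_topology}"
  assumes m: "m > 0"
  shows "(LBINT s=ereal (m * a)..ereal (m * b). F s) = m *\<^sub>R (LBINT s=ereal a..ereal b. F (m * s))"
  using m set_integral_lborel_dilate[OF m, where F=F and a=a and b=b]
    set_integral_lborel_dilate[OF m, where F=F and a=b and b=a]
  by (simp add: interval_lebesgue_integral_def)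

lemma boxsym_dyadic: "boxsym \<sigma> j k \<xi> = boxsym \<sigma> 0 k (\<xi> / 2 powr real_of_int j)"
  by (simp add: boxsym_def powr_minus_divide)

lemma box_dyadic:
  fixes j :: int
  defines "c \<equiv> 2 powr real_of_int j"
  shows "box \<sigma> j k u = (\<lambda>x. box \<sigma> 0 k (\<lambda>y. u (y / c)) (c * x))"
proof
  fix x
  have c: "c > 0" unfolding c_def by simp
  let ?S = "\<lambda>\<xi>. complex_of_real (boxsym \<sigma> j k \<xi>) * fourier u \<xi>"
  have symbol: "(\<lambda>\<xi>. complex_of_real (boxsym \<sigma> 0 k \<xi>) * fourier (\<lambda>y. u (y / c)) \<xi>)
      = (\<lambda>\<xi>. complex_of_real c * ?S (c * \<xi>))"
    using c by (simp add: fourier_dilate boxsym_dyadic[of \<sigma> j] c_def mult.left_commute)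
  have "box \<sigma> 0 k (\<lambda>y. u (y / c)) (c * x) = complex_of_real c * inv_fourier (\<lambda>\<xi>. ?S (c * \<xi>)) (c * x)"
    unfolding box_def symbol by (rule inv_fourier_cmult)
  also have "\<dots> = box \<sigma> j k u x"
    using c by (simp add: inv_fourier_dilate[where G = ?S] box_def)
  finally show "box \<sigma> j k u x = box \<sigma> 0 k (\<lambda>y. u (y / c)) (c * x)" ..
qed

lemma DboxW_dyadic:
  fixes j :: int
  defines "c \<equiv> 2 powr real_of_int j"
  shows "DboxW \<alpha> \<sigma> j k u
    = (\<lambda>t x. complex_of_real (c powr \<alpha>) * DboxW \<alpha> \<sigma> 0 k (\<lambda>y. u (y / c)) (c ^ 4 * t) (c * x))"
proof (intro ext)
  fix t x
  have c: "c > 0" unfolding c_def by simp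
  let ?S = "\<lambda>\<xi>. complex_of_real (\<bar>\<xi>\<bar> powr \<alpha> * boxsym \<sigma> j k \<xi>) * cis (t * \<xi> ^ 4) * fourier u \<xi>"
  have symbol: "(\<lambda>\<xi>. complex_of_real (\<bar>\<xi>\<bar> powr \<alpha> * boxsym \<sigma> 0 k \<xi>) * cis (c ^ 4 * t * \<xi> ^ 4)
          * fourier (\<lambda>y. u (y / c)) \<xi>)
      = (\<lambda>\<xi>. complex_of_real (c / c powr \<alpha>) * ?S (c * \<xi>))"
    using c by (simp add: fourier_dilate boxsym_dyadic[of \<sigma> j] c_def[symmetric] abs_mult powr_mult
        power_mult_distrib field_simps)
  have "DboxW \<alpha> \<sigma> 0 k (\<lambda>y. u (y / c)) (c ^ 4 * t) (c * x)
      = complex_of_real (c / c powr \<alpha>) * inv_fourier (\<lambda>\<xi>. ?S (c * \<xi>)) (c * x)"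
    unfolding DboxW_def symbol by (rule inv_fourier_cmult)
  also have "\<dots> = complex_of_real (1 / c powr \<alpha>) * DboxW \<alpha> \<sigma> j k u t x"
    using c by (subst inv_fourier_dilate[where G = ?S]) (simp_all add: DboxW_def)
  finally show "DboxW \<alpha> \<sigma> j k u t x
      = complex_of_real (c powr \<alpha>) * DboxW \<alpha> \<sigma> 0 k (\<lambda>y. u (y / c)) (c ^ 4 * t) (c * x)"
    using c by simp
qed

lemma Duhamel_integral_dilate:
  fixes c t \<xi> :: real
  assumes c: "c > 0"
  shows "(LBINT s=0..ereal (c ^ 4 * t). cis ((c ^ 4 * t - s) * \<xi> ^ 4) * fourier (\<lambda>y. f (s / c ^ 4) (y / c)) \<xi>)
    = complex_of_real (c ^ 5) * (LBINT s=0..t. cis ((t - s) * (c * \<xi>) ^ 4) * fourier (f s) (c * \<xi>))"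
proof -
  let ?F = "\<lambda>s. cis ((c ^ 4 * t - s) * \<xi> ^ 4) * fourier (\<lambda>y. f (s / c ^ 4) (y / c)) \<xi>"
  have "(LBINT s=0..ereal (c ^ 4 * t). ?F s) = c ^ 4 *\<^sub>R (LBINT s=0..t. ?F (c ^ 4 * s))"
    using interval_integral_lborel_dilate[where m = "c ^ 4" and a = 0 and b = t and F = ?F] c
    by (simp add: zero_ereal_def)
  also have "(\<lambda>s. ?F (c ^ 4 * s))
      = (\<lambda>s. complex_of_real c * (cis ((t - s) * (c * \<xi>) ^ 4) * fourier (f s) (c * \<xi>)))"
    using c by (simp add: fourier_dilate field_simps)
  finally show ?thesis
    by (simp add: scaleR_conv_of_real eval_nat_numeral)
qed

lemma DboxA_dyadic:
  fixes j :: int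
  defines "c \<equiv> 2 powr real_of_int j"
  shows "DboxA \<alpha> \<sigma> j k f
    = (\<lambda>t x. complex_of_real (c powr \<alpha> / c ^ 4)
        * DboxA \<alpha> \<sigma> 0 k (\<lambda>s y. f (s / c ^ 4) (y / c)) (c ^ 4 * t) (c * x))"
proof (intro ext)
  fix t x
  have c: "c > 0" unfolding c_def by simp
  let ?g = "\<lambda>s y. f (s / c ^ 4) (y / c)"
  let ?I = "\<lambda>\<xi>. LBINT s=0..t. cis ((t - s) * \<xi> ^ 4) * fourier (f s) \<xi>"
  let ?S = "\<lambda>\<xi>. complex_of_real (\<bar>\<xi>\<bar> powr \<alpha> * boxsym \<sigma> j k \<xi>) * ?I \<xi>"
  have symbol: "(\<lambda>\<xi>. complex_of_real (\<bar>\<xi>\<bar> powr \<alpha> * boxsym \<sigma> 0 k \<xi>)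
        * (LBINT s=0..c ^ 4 * t. cis ((c ^ 4 * t - s) * \<xi> ^ 4) * fourier (?g s) \<xi>))
      = (\<lambda>\<xi>. complex_of_real (c ^ 5 / c powr \<alpha>) * ?S (c * \<xi>))"
    unfolding Duhamel_integral_dilate[OF c, where f = f and t = t] using c by (simp add: boxsym_dyadic[of \<sigma> j] c_def[symmetric] abs_mult powr_mult field_simps)
  have "DboxA \<alpha> \<sigma> 0 k ?g (c ^ 4 * t) (c * x)
      = complex_of_real (c ^ 5 / c powr \<alpha>) * inv_fourier (\<lambda>\<xi>. ?S (c * \<xi>)) (c * x)"
    unfolding DboxA_def symbol by (rule inv_fourier_cmult)
  also have "\<dots> = complex_of_real (c ^ 4 / c powr \<alpha>) * DboxA \<alpha> \<sigma> j k f t x"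
    using c by (subst inv_fourier_dilate[where G = ?S]) (simp_all add: DboxA_def eval_nat_numeral)
  finally show "DboxA \<alpha> \<sigma> j k f t x
      = complex_of_real (c powr \<alpha> / c ^ 4) * DboxA \<alpha> \<sigma> 0 k ?g (c ^ 4 * t) (c * x)"
    using c by simp
qed

section \<open>Dilation invariance of the Schwartz classes\<close>

lemma has_vector_derivative_dilate:
  fixes g :: "real \<Rightarrow> 'a::real_normed_vector"
  assumes c: "c \<noteq> 0" and g: "(g has_vector_derivative g') (at (x / c))"
  shows "((\<lambda>x. a *\<^sub>R g (x / c)) has_vector_derivative (a / c) *\<^sub>R g') (at x)"
proof -
  have "((\<lambda>x. x / c) has_vector_derivative 1 / c) (at x)"
    unfolding has_real_derivative_iff_has_vector_derivative[symmetric]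
    using c by (auto intro!: derivative_eq_intros)
  from vector_diff_chain_at[OF this g]
  have "((\<lambda>x. g (x / c)) has_vector_derivative (1 / c) *\<^sub>R g') (at x)"
    by (simp add: o_def)
  from bounded_linear.has_vector_derivative[OF bounded_linear_scaleR_right this, of a] show ?thesis
    by simp
qed

lemma bounded_weighted_compose:
  fixes F :: "'a \<Rightarrow> 'b::real_normed_vector" and w :: "'a \<Rightarrow> real"
  assumes bnd: "bounded (range (\<lambda>z. (w z ^ k) *\<^sub>R F z))"
    and w: "\<And>z. 0 \<le> w z" "\<And>z. w z \<le> M * w (\<phi> z)" and M: "0 \<le> M"
  shows "bounded (range (\<lambda>z. (w z ^ k) *\<^sub>R (K *\<^sub>R F (\<phi> z))))"
proof -
  obtain B where B: "\<And>z. \<bar>w z\<bar> ^ k * norm (F z) \<le> B"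
    using bnd unfolding bounded_iff by (auto simp: power_abs)
  have "\<bar>w z\<bar> ^ k * (\<bar>K\<bar> * norm (F (\<phi> z))) \<le> \<bar>K\<bar> * M ^ k * B" for z
  proof -
    have "\<bar>w z\<bar> ^ k * (\<bar>K\<bar> * norm (F (\<phi> z))) \<le> (M * w (\<phi> z)) ^ k * (\<bar>K\<bar> * norm (F (\<phi> z)))"
      using w by (intro mult_right_mono power_mono) auto
    also have "\<dots> = \<bar>K\<bar> * M ^ k * (\<bar>w (\<phi> z)\<bar> ^ k * norm (F (\<phi> z)))"
      using w(1) by (simp add: power_mult_distrib)
    also have "\<dots> \<le> \<bar>K\<bar> * M ^ k * B"
      using B[of "\<phi> z"] M by (intro mult_left_mono) auto
    finally show ?thesis .
  qed
  then show ?thesis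
    unfolding bounded_iff by (auto simp: power_abs abs_mult mult.assoc)
qed

lemma abs_le_mult_abs_divide:
  fixes c x M :: real
  assumes "c \<noteq> 0" "\<bar>c\<bar> \<le> M"
  shows "\<bar>x\<bar> \<le> M * \<bar>x / c\<bar>"
proof -
  have "\<bar>x\<bar> = \<bar>c\<bar> * \<bar>x / c\<bar>"
    using assms(1) by (simp add: abs_divide)
  also have "\<dots> \<le> M * \<bar>x / c\<bar>"
    using assms(2) by (intro mult_right_mono) auto
  finally show ?thesis .
qed

lemma schwartz1_dilate:
  assumes u: "schwartz1 u" and c: "c \<noteq> 0"
  shows "schwartz1 (\<lambda>y. u (y / c))"
proof -
  obtain D where D: "D 0 = u" "\<And>n x. (D n has_vector_derivative D (Suc n) x) (at x)"
    "\<And>m n. bounded (range (\<lambda>x. ((1 + \<bar>x\<bar>) ^ m) *\<^sub>R D n x))"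
    using u unfolding schwartz1_def by blast
  define D' where "D' n x = ((1 / c) ^ n) *\<^sub>R D n (x / c)" for n x
  have "D' 0 = (\<lambda>y. u (y / c))"
    using D(1) by (auto simp: D'_def)
  moreover have "(D' n has_vector_derivative D' (Suc n) x) (at x)" for n x
    using has_vector_derivative_dilate[OF c D(2)[of n "x / c"], of "(1 / c) ^ n"]
    unfolding D'_def by (simp add: ac_simps)
  moreover have "1 + \<bar>x\<bar> \<le> max 1 \<bar>c\<bar> * (1 + \<bar>x / c\<bar>)" for x
    using abs_le_mult_abs_divide[OF c, of "max 1 \<bar>c\<bar>" x] unfolding distrib_left by linarith
  then have "bounded (range (\<lambda>x. ((1 + \<bar>x\<bar>) ^ m) *\<^sub>R D' n x))" for m n
    unfolding D'_def by (intro bounded_weighted_compose[OF D(3)]) auto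
  ultimately show ?thesis
    unfolding schwartz1_def by blast
qed

lemma schwartz2_dilate:
  assumes f: "schwartz2 f" and m: "m \<noteq> 0" and c: "c \<noteq> 0"
  shows "schwartz2 (\<lambda>s y. f (s / m) (y / c))"
proof -
  obtain D where D: "D 0 0 = f"
    "\<And>a b t x. ((\<lambda>s. D a b s x) has_vector_derivative D (Suc a) b t x) (at t)"
    "\<And>a b t x. ((\<lambda>y. D a b t y) has_vector_derivative D a (Suc b) t x) (at x)"
    "\<And>k a b. bounded (range (\<lambda>(t, x). ((1 + \<bar>t\<bar> + \<bar>x\<bar>) ^ k) *\<^sub>R D a b t x))"
    using f unfolding schwartz2_def by blast
  define D' where "D' a b t x = ((1 / m) ^ a * (1 / c) ^ b) *\<^sub>R D a b (t / m) (x / c)" for a b t x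
  have "D' 0 0 = (\<lambda>s y. f (s / m) (y / c))"
    using D(1) by (auto simp: D'_def fun_eq_iff)
  moreover have "((\<lambda>s. D' a b s x) has_vector_derivative D' (Suc a) b t x) (at t)" for a b t x
    using has_vector_derivative_dilate[OF m D(2)[of a b "x / c" "t / m"], of "(1 / m) ^ a * (1 / c) ^ b"]
    unfolding D'_def by (simp add: ac_simps)
  moreover have "((\<lambda>y. D' a b t y) has_vector_derivative D' a (Suc b) t x) (at x)" for a b t x
    using has_vector_derivative_dilate[OF c D(3)[of a b "t / m" "x / c"], of "(1 / m) ^ a * (1 / c) ^ b"]
    unfolding D'_def by (simp add: ac_simps)
  moreover have "1 + \<bar>t\<bar> + \<bar>x\<bar> \<le> max 1 (max \<bar>m\<bar> \<bar>c\<bar>) * (1 + \<bar>t / m\<bar> + \<bar>x / c\<bar>)" for t x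
    using abs_le_mult_abs_divide[OF m, of "max 1 (max \<bar>m\<bar> \<bar>c\<bar>)" t]
      abs_le_mult_abs_divide[OF c, of "max 1 (max \<bar>m\<bar> \<bar>c\<bar>)" x]
    unfolding distrib_left by linarith
  then have "bounded (range (\<lambda>(t, x). ((1 + \<bar>t\<bar> + \<bar>x\<bar>) ^ k) *\<^sub>R D' a b t x))" for k a b
    using bounded_weighted_compose[OF D(4)[unfolded case_prod_beta'],
        where \<phi> = "\<lambda>(t, x). (t / m, x / c)" and M = "max 1 (max \<bar>m\<bar> \<bar>c\<bar>)"
        and K = "(1 / m) ^ a * (1 / c) ^ b"]
    by (simp add: D'_def case_prod_beta')
  ultimately show ?thesis
    unfolding schwartz2_def by blast
qed

lemma dyadic_pow4: "(2 powr real_of_int j) ^ 4 = 2 powr (4 * real_of_int j)"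
  by (subst powr_power) auto

lemma Lq_box_dyadic:
  fixes j :: int
  assumes "0 < q"
  shows "Lq q (box \<sigma> j k u)
    = ennreal (2 powr (- real_of_int j * rcp q)) * Lq q (box \<sigma> 0 k (\<lambda>y. u (y / 2 powr real_of_int j)))"
  using assms by (simp add: box_dyadic[of \<sigma> j] Lq_dilate powr_powr)

lemma mixnorm_box_dyadic:
  fixes j :: int
  defines "c \<equiv> 2 powr real_of_int j"
  assumes "0 < p" "0 < r"
  shows "mixnorm p r (\<lambda>t. box \<sigma> j k (f t))
    = ennreal (2 powr (- real_of_int j * (4 * rcp r + rcp p)))
      * mixnorm p r (\<lambda>t. box \<sigma> 0 k (\<lambda>y. f (t / c ^ 4) (y / c)))"
proof -
  have c: "c > 0"
    unfolding c_def by simp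
  let ?F = "\<lambda>t. box \<sigma> 0 k (\<lambda>y. f (t / c ^ 4) (y / c))"
  have "mixnorm p r (\<lambda>t. box \<sigma> j k (f t)) = mixnorm p r (\<lambda>t x. ?F (c ^ 4 * t) (c * x))"
    using c by (simp add: box_dyadic[of \<sigma> j] c_def)
  also have "\<dots> = ennreal ((c ^ 4) powr (- rcp r) * c powr (- rcp p)) * mixnorm p r ?F"
    using mixnorm_dilate[OF assms(2,3), where m = "c ^ 4" and c = c and F = ?F] c by simp
  also have "(c ^ 4) powr (- rcp r) * c powr (- rcp p) = 2 powr (- real_of_int j * (4 * rcp r + rcp p))"
    unfolding c_def dyadic_pow4 by (simp add: powr_powr powr_add[symmetric] algebra_simps)
  finally show ?thesis .
qed

lemma mixnorm_DboxW_dyadic: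
  fixes j :: int
  defines "c \<equiv> 2 powr real_of_int j"
  assumes "0 < p" "0 < r"
  shows "mixnorm p r (DboxW \<alpha> \<sigma> j k u)
    = ennreal (2 powr (real_of_int j * (\<alpha> - 4 * rcp r - rcp p)))
      * mixnorm p r (DboxW \<alpha> \<sigma> 0 k (\<lambda>y. u (y / c)))"
proof -
  have c: "c > 0"
    unfolding c_def by simp
  let ?F = "DboxW \<alpha> \<sigma> 0 k (\<lambda>y. u (y / c))"
  have "mixnorm p r (DboxW \<alpha> \<sigma> j k u)
      = ennreal (c powr \<alpha>) * mixnorm p r (\<lambda>t x. ?F (c ^ 4 * t) (c * x))"
    unfolding DboxW_dyadic[of \<alpha> \<sigma> j] c_def[symmetric] using assms(2,3) c by (simp add: mixnorm_cmult)
  also have "\<dots> = ennreal (c powr \<alpha> * ((c ^ 4) powr (- rcp r) * c powr (- rcp p))) * mixnorm p r ?F"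
    using mixnorm_dilate[OF assms(2,3), where m = "c ^ 4" and c = c and F = ?F] c
    by (simp add: ennreal_mult mult.assoc)
  also have "c powr \<alpha> * ((c ^ 4) powr (- rcp r) * c powr (- rcp p))
      = 2 powr (real_of_int j * (\<alpha> - 4 * rcp r - rcp p))"
    unfolding c_def dyadic_pow4 by (simp add: powr_powr powr_add[symmetric] algebra_simps)
  finally show ?thesis .
qed

lemma mixnorm_DboxA_dyadic:
  fixes j :: int
  defines "c \<equiv> 2 powr real_of_int j"
  assumes "0 < p" "0 < r"
  shows "mixnorm p r (DboxA \<alpha> \<sigma> j k f)
    = ennreal (2 powr (real_of_int j * (\<alpha> - 4 - 4 * rcp r - rcp p)))
      * mixnorm p r (DboxA \<alpha> \<sigma> 0 k (\<lambda>s y. f (s / c ^ 4) (y / c)))"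
proof -
  have c: "c > 0"
    unfolding c_def by simp
  let ?F = "DboxA \<alpha> \<sigma> 0 k (\<lambda>s y. f (s / c ^ 4) (y / c))"
  have "mixnorm p r (DboxA \<alpha> \<sigma> j k f)
      = ennreal (c powr \<alpha> / c ^ 4) * mixnorm p r (\<lambda>t x. ?F (c ^ 4 * t) (c * x))"
    unfolding DboxA_dyadic[of \<alpha> \<sigma> j] c_def[symmetric]
    using c by (subst mixnorm_cmult[OF assms(2,3)]) (auto simp: norm_divide norm_power)
  also have "\<dots> = ennreal (c powr \<alpha> / c ^ 4 * ((c ^ 4) powr (- rcp r) * c powr (- rcp p))) * mixnorm p r ?F"
    using mixnorm_dilate[OF assms(2,3), where m = "c ^ 4" and c = c and F = ?F] c
    by (simp add: ennreal_mult[symmetric] mult.assoc[symmetric])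
  also have "c powr \<alpha> / c ^ 4 * ((c ^ 4) powr (- rcp r) * c powr (- rcp p))
      = 2 powr (real_of_int j * (\<alpha> - 4 - 4 * rcp r - rcp p))"
    unfolding c_def dyadic_pow4 by (simp add: powr_powr powr_add[symmetric] powr_diff[symmetric] algebra_simps)
  finally show ?thesis .
qed

lemma ennreal_bound_rescale:
  fixes a b C :: real
  assumes "N0 \<le> ennreal C * M0" "N = ennreal a * N0" "M = ennreal b * M0" "a \<ge> 0" "b > 0"
  shows "N \<le> ennreal C * ennreal (a / b) * M"
proof -
  have "N \<le> ennreal a * (ennreal C * (ennreal (1 / b) * M))"
    using assms by (simp add: ennreal_inverse_cancel mult_left_mono)
  also have "\<dots> = ennreal C * ennreal (a / b) * M"
    using assms(4,5) by (simp add: ennreal_mult[symmetric] ac_simps)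
  finally show ?thesis .
qed

lemma DboxW_dyadic_estimate:
  fixes j :: int
  assumes "0 < p" "0 < r" "0 < q"
    and bound: "\<forall>k v. schwartz1 v \<longrightarrow> mixnorm p r (DboxW \<alpha> \<sigma> 0 k v) \<le> ennreal C * Lq q (box \<sigma> 0 k v)"
    and u: "schwartz1 u"
  shows "mixnorm p r (DboxW \<alpha> \<sigma> j k u)
    \<le> ennreal C * ennreal (2 powr (real_of_int j * (\<alpha> - 4 * rcp r - rcp p + rcp q))) * Lq q (box \<sigma> j k u)"
proof -
  have "schwartz1 (\<lambda>y. u (y / 2 powr real_of_int j))"
    using u by (simp add: schwartz1_dilate)
  from ennreal_bound_rescale[OF bound[rule_format, OF this]
      mixnorm_DboxW_dyadic[OF assms(1,2)] Lq_box_dyadic[OF assms(3)]]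
  show ?thesis
    by (simp add: powr_diff[symmetric] algebra_simps)
qed

lemma DboxA_dyadic_estimate:
  fixes j :: int
  assumes "0 < p" "0 < r" "0 < p1" "0 < r1"
    and bound: "\<forall>k g. schwartz2 g \<longrightarrow>
      mixnorm p r (DboxA \<alpha> \<sigma> 0 k g) \<le> ennreal C * mixnorm p1 r1 (\<lambda>t. box \<sigma> 0 k (g t))"
    and f: "schwartz2 f"
  shows "mixnorm p r (DboxA \<alpha> \<sigma> j k f)
    \<le> ennreal C * ennreal (2 powr (real_of_int j * (\<alpha> - 4 - 4 * rcp r - rcp p + 4 * rcp r1 + rcp p1)))
      * mixnorm p1 r1 (\<lambda>t. box \<sigma> j k (f t))"
proof -
  have "schwartz2 (\<lambda>s y. f (s / (2 powr real_of_int j) ^ 4) (y / 2 powr real_of_int j))"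
    using f by (simp add: schwartz2_dilate)
  from ennreal_bound_rescale[OF bound[rule_format, OF this]
      mixnorm_DboxA_dyadic[OF assms(1,2)] mixnorm_box_dyadic[OF assms(3,4)]]
  show ?thesis
    by (simp add: powr_diff[symmetric] algebra_simps)
qed

theorem lemma4p5:
  fixes p r p1 r1 q :: ennreal and \<alpha> :: real and \<sigma> :: "real \<Rightarrow> real"
  assumes exps: "0 < p" "0 < r" "0 < p1" "0 < r1" "0 < q"
    and alpha: "0 < \<alpha>"
    and sigma_smooth: "\<exists>S::nat \<Rightarrow> real \<Rightarrow> real. S 0 = \<sigma> \<and>
                         (\<forall>n x. (S n has_real_derivative S (Suc n) x) (at x))"
    and sigma_supp: "\<And>\<xi>. \<bar>\<xi>\<bar> > 3/4 \<Longrightarrow> \<sigma> \<xi> = 0"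
    and sigma_pu: "\<And>\<xi>. ((\<lambda>k::int. \<sigma> (\<xi> - real_of_int k)) has_sum 1) UNIV"
    and hypW: "\<exists>C::real. \<forall>(k::int) u. schwartz1 u \<longrightarrow>
                 mixnorm p r (DboxW \<alpha> \<sigma> 0 k u) \<le> ennreal C * Lq q (box \<sigma> 0 k u)"
    and hypA: "\<exists>C::real. \<forall>(k::int) f. schwartz2 f \<longrightarrow>
                 mixnorm p r (DboxA \<alpha> \<sigma> 0 k f) \<le> ennreal C * mixnorm p1 r1 (\<lambda>t. box \<sigma> 0 k (f t))"
  shows "(\<exists>C::real. \<forall>(j::int) (k::int) u. schwartz1 u \<longrightarrow>
            mixnorm p r (DboxW \<alpha> \<sigma> j k u)
              \<le> ennreal C * ennreal (2 powr (real_of_int j * (\<alpha> - 4 * rcp r - rcp p + rcp q)))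
                 * Lq q (box \<sigma> j k u))
       \<and> (\<exists>C::real. \<forall>(j::int) (k::int) f. schwartz2 f \<longrightarrow>
            mixnorm p r (DboxA \<alpha> \<sigma> j k f)
              \<le> ennreal C * ennreal (2 powr (real_of_int j * (\<alpha> - 4 - 4 * rcp r - rcp p + 4 * rcp r1 + rcp p1)))
                 * mixnorm p1 r1 (\<lambda>t. box \<sigma> j k (f t)))"
  using hypW DboxW_dyadic_estimate[OF exps(1,2,5)] hypA DboxA_dyadic_estimate[OF exps(1-4)]
  by blast

end
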